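(* Let $f$ be a tempered distribution on $\mathbb{R}$, and let $\theta$ have sub-polynomial growth and $\omega$ have sub-exponential growth. Then for every $H\in\mathbb{R}$, $$\mathcal{D}^{ws}_f(H)\le \inf_{p\in\mathbb{R}}\big(Hp-\zeta_f(p)+1\big),$$ where $\zeta_f$ is the wavelet scaling function built from the $(\theta,\omega)$-leaders. In particular, if there is $c\in\mathbb{R}$ with $\zeta_f(p)=cp$ for all $p\in\mathbb{R}$, then for every real $H\neq c$ the set $\{x: h^{ws}_f(x)=H\}$ is empty, i.e. the weak-scaling exponent of $f$ is constant (equal to $c$) wherever it is finite.
   Context: Wavelets: $\{\psi_{j,k}(x)=2^{j/2}\psi(2^jx-k)\}$ is an $r$-smooth orthonormal wavelet basis of $L^2(\mathbb{R})$ with $r$ large enough, and $c_{j,k}=2^j\int f(x)\psi(2^jx-k)dx$ (duality pairing for tempered distributions). Two-microlocal spaces: $f\in C^{s,s'}(x_0)$ if there is $C$ with $|c_{j,k}|\le C2^{-sj}(1+|2^jx_0-k|)^{-s'}$ for all $j,k$ (wavelet basis with $r>\max(|s|,|s'|)$). $f\in\Gamma^s(x_0)$ if there exists $s'>0$ with $f\in C^{s,-s'}(x_0)$. The weak-scaling exponent is $h^{ws}_f(x_0)=\sup\{s: f\in\Gamma^s(x_0)\}$, and the weak-scaling spectrum is $\mathcal{D}^{ws}_f(H)=\dim_H\{x: h^{ws}_f(x)=H\}$ (Hausdorff dimension, with $\dim_H\emptyset=-\infty$). A function $\theta:\mathbb{N}\to\mathbb{R}^+$ has sub-polynomial growth if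 $\theta(j+1)\ge\theta(j)\ge j$ for all $j$ and $\limsup_{j\to\infty}\frac{\log(\theta(j)-j)}{\log j}<1$. A function $\omega:\mathbb{N}\to\mathbb{R}^+$ has sub-exponential growth if it is non-decreasing, $\omega(j)\to+\infty$ and $\frac{\log\omega(j)}{j}\to 0$. The $(\theta,\omega)$-neighbourhood $V_{(\theta,\omega)}(j,k)$ is the set of pairs $(j',k')$ with $j\le j'\le\theta(j)$ and $|k2^{-j}-k'2^{-j'}|\le \omega(j')2^{-j}$. The $(\theta,\omega)$-leaders are $d_{j,k}=\sup_{(j',k')\in V_{(\theta,\omega)}(j,k)}|c_{j',k'}|$. The wavelet scaling function is, for $p\in\mathbb{R}$, $$\zeta_f(p)=\liminf_{j\to+\infty}\frac{\log\Big(\omega(j)\,2^{-j}\sum_{k=l\cdot[2\omega(j)]}|d_{j,k}|^p\Big)}{\log(2^{-j})},$$ where the sum runs over the indices $k$ that are integer multiples $l\cdot[2\omega(j)]$ of $[2\omega(j)]$ (integer part), with $k2^{-j}$ in the fixed bounded interval on which $f$ is analyzed. *)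

theory Defs
  imports "HOL-Analysis.Analysis" "HOL-Library.Liminf_Limsup"
begin

definition schwartz_real :: "(real \<Rightarrow> real) \<Rightarrow> bool" where
  "schwartz_real \<phi> \<longleftrightarrow>
     (\<forall>n x. ((deriv ^^ n) \<phi>) differentiable (at x)) \<and>
     (\<forall>m n. bounded (range (\<lambda>x. \<bar>x\<bar> ^ m * (deriv ^^ n) \<phi> x)))"

definition schwartz :: "(real \<Rightarrow> complex) \<Rightarrow> bool" where
  "schwartz \<phi> \<longleftrightarrow> schwartz_real (\<lambda>x. Re (\<phi> x)) \<and> schwartz_real (\<lambda>x. Im (\<phi> x))"

definition schwartz_seminorm :: "nat \<Rightarrow> nat \<Rightarrow> (real \<Rightarrow> real) \<Rightarrow> real" where
  "schwartz_seminorm m n \<phi> = (SUP x. \<bar>x\<bar> ^ m * \<bar>(deriv ^^ n) \<phi> x\<bar>)"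

definition tempered_distribution :: "((real \<Rightarrow> complex) \<Rightarrow> complex) \<Rightarrow> bool" where
  "tempered_distribution T \<longleftrightarrow>
     (\<forall>\<phi> \<psi>. schwartz \<phi> \<longrightarrow> schwartz \<psi> \<longrightarrow> T (\<lambda>x. \<phi> x + \<psi> x) = T \<phi> + T \<psi>) \<and>
     (\<forall>a \<phi>. schwartz \<phi> \<longrightarrow> T (\<lambda>x. a * \<phi> x) = a * T \<phi>) \<and>
     (\<exists>C N. \<forall>\<phi>. schwartz \<phi> \<longrightarrow>
        cmod (T \<phi>) \<le> C * (\<Sum>m\<le>N. \<Sum>n\<le>N.
            schwartz_seminorm m n (\<lambda>x. Re (\<phi> x)) + schwartz_seminorm m n (\<lambda>x. Im (\<phi> x))))"

definition wav :: "(real \<Rightarrow> real) \<Rightarrow> int \<Rightarrow> int \<Rightarrow> real \<Rightarrow> real" where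
  "wav \<psi> j k x = 2 powr (real_of_int j / 2) * \<psi> (2 powr (real_of_int j) * x - real_of_int k)"

definition orthonormal_wavelet :: "(real \<Rightarrow> real) \<Rightarrow> bool" where
  "orthonormal_wavelet \<psi> \<longleftrightarrow>
     (\<forall>j k. wav \<psi> j k \<in> borel_measurable lborel \<and> integrable lborel (\<lambda>x. (wav \<psi> j k x)\<^sup>2)) \<and>
     (\<forall>j k j' k'. (LINT x|lborel. wav \<psi> j k x * wav \<psi> j' k' x)
                  = (if j = j' \<and> k = k' then 1 else 0)) \<and>
     (\<forall>g. g \<in> borel_measurable lborel \<longrightarrow> integrable lborel (\<lambda>x. (g x)\<^sup>2) \<longrightarrow>
          (\<forall>j k. (LINT x|lborel. g x * wav \<psi> j k x) = 0) \<longrightarrow> (AE x in lborel. g x = 0))"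

definition wcoef :: "(real \<Rightarrow> real) \<Rightarrow> ((real \<Rightarrow> complex) \<Rightarrow> complex) \<Rightarrow> nat \<Rightarrow> int \<Rightarrow> complex" where
  "wcoef \<psi> f j k = complex_of_real (2 ^ j) *
      f (\<lambda>x. complex_of_real (\<psi> (2 ^ j * x - real_of_int k)))"

text \<open>Two-microlocal space C^{s,s'}(x0) (coefficient characterisation).\<close>
definition two_microlocal :: "(nat \<Rightarrow> int \<Rightarrow> complex) \<Rightarrow> real \<Rightarrow> real \<Rightarrow> real \<Rightarrow> bool" where
  "two_microlocal c s s' x0 \<longleftrightarrow>
     (\<exists>C. \<forall>j k. cmod (c j k) \<le> C * 2 powr (- s * real j)
                   * (1 + \<bar>2 ^ j * x0 - real_of_int k\<bar>) powr (- s'))"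

definition Gamma_space :: "(nat \<Rightarrow> int \<Rightarrow> complex) \<Rightarrow> real \<Rightarrow> real \<Rightarrow> bool" where
  "Gamma_space c s x0 \<longleftrightarrow> (\<exists>s'>0. two_microlocal c s (- s') x0)"

definition weak_scaling_exp :: "(nat \<Rightarrow> int \<Rightarrow> complex) \<Rightarrow> real \<Rightarrow> ereal" where
  "weak_scaling_exp c x0 = (SUP s \<in> {s. Gamma_space c s x0}. ereal s)"

definition hausdorff_pre :: "real \<Rightarrow> real \<Rightarrow> real set \<Rightarrow> ennreal" where
  "hausdorff_pre s \<delta> A = (INF U \<in> {U :: nat \<Rightarrow> real set.
        A \<subseteq> (\<Union>i. U i) \<and> (\<forall>i. bounded (U i) \<and> diameter (U i) \<le> \<delta>)}.
        (\<Sum>i. ennreal (diameter (U i) powr s)))"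

definition hausdorff_measure :: "real \<Rightarrow> real set \<Rightarrow> ennreal" where
  "hausdorff_measure s A = (SUP \<delta> \<in> {0<..}. hausdorff_pre s \<delta> A)"

definition hausdorff_dim :: "real set \<Rightarrow> ereal" where
  "hausdorff_dim A = (if A = {} then - \<infinity>
      else (INF s \<in> {s. 0 \<le> s \<and> hausdorff_measure s A = 0}. ereal s))"

definition subpoly_growth :: "(nat \<Rightarrow> real) \<Rightarrow> bool" where
  "subpoly_growth \<theta> \<longleftrightarrow> (\<forall>j. \<theta> j > 0) \<and> (\<forall>j. real j \<le> \<theta> j \<and> \<theta> j \<le> \<theta> (Suc j)) \<and>
     limsup (\<lambda>j. if \<theta> j - real j = 0 then - \<infinity>
                  else ereal (ln (\<theta> j - real j) / ln (real j))) < 1"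

definition subexp_growth :: "(nat \<Rightarrow> real) \<Rightarrow> bool" where
  "subexp_growth \<omega> \<longleftrightarrow> (\<forall>j. \<omega> j > 0) \<and> mono \<omega> \<and> filterlim \<omega> at_top sequentially \<and>
     ((\<lambda>j. ln (\<omega> j) / real j) \<longlonglongrightarrow> 0)"

definition nbhd :: "(nat \<Rightarrow> real) \<Rightarrow> (nat \<Rightarrow> real) \<Rightarrow> nat \<Rightarrow> int \<Rightarrow> (nat \<times> int) set" where
  "nbhd \<theta> \<omega> j k = {(j', k'). j \<le> j' \<and> real j' \<le> \<theta> j \<and>
      \<bar>real_of_int k / 2 ^ j - real_of_int k' / 2 ^ j'\<bar> \<le> \<omega> j' / 2 ^ j}"

definition leader :: "(nat \<Rightarrow> real) \<Rightarrow> (nat \<Rightarrow> real) \<Rightarrow> (nat \<Rightarrow> int \<Rightarrow> complex) \<Rightarrow> nat \<Rightarrow> int \<Rightarrow> real" where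
  "leader \<theta> \<omega> c j k = (SUP jk' \<in> nbhd \<theta> \<omega> j k. cmod (c (fst jk') (snd jk')))"

text \<open>Structure function: sum over the sampled positions k = l\<cdot>[2\<omega>(j)]
  with k 2^{-j} \<in> [a,b]; convention 0 powr p = 0 (zero leaders
  do not contribute).\<close>
definition structure_fun :: "(nat \<Rightarrow> real) \<Rightarrow> (nat \<Rightarrow> real) \<Rightarrow> (nat \<Rightarrow> int \<Rightarrow> complex)
     \<Rightarrow> real \<Rightarrow> real \<Rightarrow> real \<Rightarrow> nat \<Rightarrow> real" where
  "structure_fun \<theta> \<omega> c a b p j =
     (\<Sum>k \<in> {k. (\<exists>l::int. k = l * \<lfloor>2 * \<omega> j\<rfloor>) \<and> a \<le> real_of_int k / 2 ^ j \<and> real_of_int k / 2 ^ j \<le> b}.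
         leader \<theta> \<omega> c j k powr p)"

definition scaling_fun :: "(nat \<Rightarrow> real) \<Rightarrow> (nat \<Rightarrow> real) \<Rightarrow> (nat \<Rightarrow> int \<Rightarrow> complex)
     \<Rightarrow> real \<Rightarrow> real \<Rightarrow> real \<Rightarrow> ereal" where
  "scaling_fun \<theta> \<omega> c a b p = liminf (\<lambda>j.
      let S = \<omega> j * 2 powr (- real j) * structure_fun \<theta> \<omega> c a b p j in
      if S = 0 then \<infinity> else ereal (ln S / ln (2 powr (- real j))))"

end

theory Submission
  imports Defs
begin

text \<open>Let \<open>h(x) = H\<close> and \<open>\<epsilon> > 0\<close>. The coefficients satisfy the two-microlocal bound with some
  exponent \<open>s1 > H - \<epsilon>\<close>, but violate it with exponent \<open>H + \<epsilon>\<close> for every decay exponent \<open>s'\<close>;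
  playing the two against each other gives arbitrarily fine scales \<open>j\<close> and positions \<open>k\<close> with
  \<open>\<bar>c j k\<bar> \<ge> 2 powr (-(H+\<epsilon>) j)\<close> and \<open>k / 2^j\<close> close to \<open>x\<close>. Rounding \<open>k\<close> to the nearest sampled
  position \<open>ks\<close>, the leader at \<open>(j, ks)\<close> dominates \<open>c j k\<close>, and it is at most \<open>2 powr (-(H-\<epsilon>) j)\<close>
  because \<open>\<theta>\<close> and \<open>\<omega>\<close> grow so slowly that the bound with exponent \<open>s1\<close> applies uniformly on the
  whole neighbourhood of \<open>(j, ks)\<close>. By the definition of \<open>\<zeta>(p)\<close>, at most
  \<open>2 powr ((H p - \<zeta>(p) + 1 + o(1)) j)\<close> sampled positions carry such a leader, so at every fine scale
  the level set is covered by that many intervals of length \<open>2 powr ((\<eta> - 1) j)\<close>: its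
  \<open>s\<close>-dimensional Hausdorff measure vanishes for \<open>s > H p - \<zeta>(p) + 1\<close>, and it is empty if
  \<open>H p - \<zeta>(p) + 1 < 0\<close>. Only the coefficient array enters.\<close>

section \<open>Growth of \<theta>, \<omega> and of powers of two\<close>

lemma powr2_mult_tendsto_0:
  assumes "e < 0"
  shows "(\<lambda>j. 2 powr (e * real j)) \<longlonglongrightarrow> 0"
proof -
  have "\<And>j. 2 powr (e * real j) = (2 powr e) ^ j"
    by (simp add: powr_powr[symmetric] powr_realpow)
  moreover have "(\<lambda>j. (2 powr e) ^ j) \<longlonglongrightarrow> 0"
    using assms by (intro LIMSEQ_power_zero) (simp add: powr_less_one)
  ultimately show ?thesis by simp
qed

lemma eventually_le_powr2_mult:
  assumes "\<delta> > 0"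
  shows "eventually (\<lambda>j. M \<le> 2 powr (\<delta> * real j)) sequentially"
proof -
  have "eventually (\<lambda>j. M / (\<delta> * ln 2) \<le> real j) sequentially"
    by (simp add: eventually_sequentially) (meson real_arch_simple order_trans of_nat_le_iff)
  then show ?thesis
  proof eventually_elim
    case (elim j)
    then have "M \<le> \<delta> * real j * ln 2"
      using assms by (simp add: divide_le_eq mult.commute mult.left_commute)
    also have "\<dots> \<le> exp (\<delta> * real j * ln 2)"
      using exp_ge_add_one_self[of "\<delta> * real j * ln 2"] by linarith
    finally show ?case by (simp add: powr_def)
  qed
qed

lemma subexp_growth_eventually_ge_1:
  "subexp_growth \<omega> \<Longrightarrow> eventually (\<lambda>j. 1 \<le> \<omega> j) sequentially"
  unfolding subexp_growth_def filterlim_at_top by auto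

lemma subexp_growth_eventually_le:
  assumes "subexp_growth \<omega>" "\<delta> > 0"
  shows "eventually (\<lambda>j. \<omega> j \<le> 2 powr (\<delta> * real j)) sequentially"
proof -
  have pos: "\<And>j. \<omega> j > 0" and lim: "(\<lambda>j. ln (\<omega> j) / real j) \<longlonglongrightarrow> 0"
    using assms(1) unfolding subexp_growth_def by auto
  have "eventually (\<lambda>j. ln (\<omega> j) / real j < \<delta> * ln 2) sequentially"
    using order_tendstoD(2)[OF lim] assms(2) by simp
  with eventually_gt_at_top[of 0] show ?thesis
  proof eventually_elim
    case (elim j)
    then have "ln (\<omega> j) < ln (2 powr (\<delta> * real j))"
      by (simp add: divide_less_eq ln_powr mult_ac)
    then show ?case using pos[of j] by (subst (asm) ln_less_cancel_iff) auto
  qed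
qed

lemma subpoly_growth_eventually_le:
  assumes "subpoly_growth \<theta>" "\<delta> > 0"
  shows "eventually (\<lambda>j. \<theta> j - real j \<le> \<delta> * real j) sequentially"
proof -
  define q where "q j = (if \<theta> j - real j = 0 then - \<infinity> else ereal (ln (\<theta> j - real j) / ln (real j)))"
    for j
  have ge: "\<And>j. real j \<le> \<theta> j" and "limsup q < 1"
    using assms(1) unfolding subpoly_growth_def q_def by auto
  then obtain r where r: "limsup q < ereal r" "ereal r < 1"
    using ereal_dense2 by blast
  have "((\<lambda>x::real. x powr (r - 1)) \<longlongrightarrow> 0) at_top"
    using r(2) by (intro tendsto_neg_powr) (auto simp: filterlim_ident)
  then have "((\<lambda>j. real j powr (r - 1)) \<longlongrightarrow> 0) sequentially"
    using filterlim_compose filterlim_real_sequentially by blast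
  then have "eventually (\<lambda>j. real j powr (r - 1) < \<delta>) sequentially"
    using order_tendstoD(2) assms(2) by blast
  with Limsup_lessD[OF r(1)] eventually_ge_at_top[of 2] show ?thesis
  proof eventually_elim
    case (elim j)
    show ?case
    proof (cases "\<theta> j - real j = 0")
      case False
      then have pos: "\<theta> j - real j > 0" using ge[of j] by simp
      have "ln (\<theta> j - real j) < r * ln (real j)"
        using elim False by (simp add: q_def divide_less_eq)
      also have "\<dots> = ln (real j powr r)" using elim(2) by (simp add: ln_powr)
      finally have "\<theta> j - real j < real j powr r"
        using pos elim(2) by (subst (asm) ln_less_cancel_iff) auto
      also have "\<dots> = real j powr (r - 1) * real j" using elim(2) by (simp add: powr_diff)
      also have "\<dots> \<le> \<delta> * real j" using elim(3) by (intro mult_right_mono) auto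
      finally show ?thesis by simp
    qed (use assms(2) in simp)
  qed
qed

lemma subexp_subpoly_eventually_le:
  assumes "subpoly_growth \<theta>" "subexp_growth \<omega>" "\<delta> > 0"
  shows "eventually (\<lambda>j. \<omega> (nat \<lfloor>\<theta> j\<rfloor>) \<le> 2 powr (\<delta> * real j)) sequentially"
proof -
  have ge: "\<And>j. real j \<le> \<theta> j" using assms(1) unfolding subpoly_growth_def by auto
  obtain N where N: "\<And>n. n \<ge> N \<Longrightarrow> \<omega> n \<le> 2 powr (\<delta> / 2 * real n)"
    using subexp_growth_eventually_le[OF assms(2), of "\<delta>/2"] assms(3)
    unfolding eventually_sequentially by auto
  from subpoly_growth_eventually_le[OF assms(1) zero_less_one] eventually_ge_at_top[of N]
  show ?thesis
  proof eventually_elim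
    case (elim j)
    define n where "n = nat \<lfloor>\<theta> j\<rfloor>"
    have "j \<le> n" using ge[of j] unfolding n_def by (simp add: le_nat_iff le_floor_iff)
    have "real n \<le> \<theta> j"
      using ge[of j] unfolding n_def by (simp add: of_nat_nat order_trans[OF of_nat_0_le_iff])
    then have "real n \<le> 2 * real j" using elim(1) by simp
    have "\<omega> n \<le> 2 powr (\<delta> / 2 * real n)" using N \<open>j \<le> n\<close> elim(2) by simp
    also have "\<dots> \<le> 2 powr (\<delta> * real j)" using \<open>real n \<le> 2 * real j\<close> assms(3) by simp
    finally show ?case unfolding n_def .
  qed
qed

section \<open>Counting positions with prescribed leader size\<close>

definition sampled_positions :: "(nat \<Rightarrow> real) \<Rightarrow> real \<Rightarrow> real \<Rightarrow> nat \<Rightarrow> int set" where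
  "sampled_positions \<omega> a b j = {k. (\<exists>l::int. k = l * \<lfloor>2 * \<omega> j\<rfloor>) \<and>
      a \<le> real_of_int k / 2 ^ j \<and> real_of_int k / 2 ^ j \<le> b}"

lemma finite_sampled_positions: "finite (sampled_positions \<omega> a b j)"
proof (rule finite_subset)
  show "sampled_positions \<omega> a b j \<subseteq> {\<lceil>a * 2 ^ j\<rceil>..\<lfloor>b * 2 ^ j\<rfloor>}"
    by (auto simp: sampled_positions_def ceiling_le_iff le_floor_iff field_simps)
qed simp

lemma structure_fun_eq_sum:
  "structure_fun \<theta> \<omega> c a b p j = (\<Sum>k\<in>sampled_positions \<omega> a b j. leader \<theta> \<omega> c j k powr p)"
  unfolding structure_fun_def sampled_positions_def ..

lemma structure_fun_eventually_le:
  assumes "subexp_growth \<omega>" "ereal z < scaling_fun \<theta> \<omega> c a b p"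
  shows "eventually (\<lambda>j. structure_fun \<theta> \<omega> c a b p j \<le> 2 powr ((1 - z) * real j)) sequentially"
proof -
  have pos: "\<And>j. \<omega> j > 0" using assms(1) unfolding subexp_growth_def by auto
  from less_LiminfD[OF assms(2)[unfolded scaling_fun_def]]
    subexp_growth_eventually_ge_1[OF assms(1)] eventually_gt_at_top[of "0::nat"]
  show ?thesis
  proof eventually_elim
    case (elim j)
    define \<Sigma> where "\<Sigma> = structure_fun \<theta> \<omega> c a b p j"
    define S where "S = \<omega> j * 2 powr (- real j) * \<Sigma>"
    have "\<Sigma> \<ge> 0" unfolding \<Sigma>_def structure_fun_eq_sum by (intro sum_nonneg) auto
    show ?case
    proof (cases "S = 0")
      case True
      then show ?thesis using pos[of j] by (simp add: S_def \<Sigma>_def)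
    next
      case False
      then have "S > 0" using pos[of j] \<open>\<Sigma> \<ge> 0\<close> by (simp add: S_def less_le)
      have "z < ln S / ln (2 powr (- real j))"
        using elim(1) False unfolding S_def \<Sigma>_def by (simp only: Let_def if_False less_ereal.simps)
      moreover have "ln (2 powr (- real j)) < 0" using elim(3) by (simp add: ln_powr)
      ultimately have "ln S < z * ln (2 powr (- real j))"
        by (subst (asm) neg_less_divide_eq)
      then have "ln S < ln (2 powr (- z * real j))" by (simp add: ln_powr)
      then have "S < 2 powr (- z * real j)"
        using \<open>S > 0\<close> by (subst (asm) ln_less_cancel_iff) auto
      then have "\<omega> j * \<Sigma> < 2 powr (- z * real j) * 2 powr (real j)"
        by (simp add: S_def powr_minus field_simps)
      moreover have "\<Sigma> \<le> \<omega> j * \<Sigma>" using elim(2) \<open>\<Sigma> \<ge> 0\<close> by (simp add: mult_le_cancel_right1)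
      ultimately have "\<Sigma> < 2 powr (- z * real j) * 2 powr (real j)" by linarith
      also have "\<dots> = 2 powr ((1 - z) * real j)" by (simp add: powr_add[symmetric] algebra_simps)
      finally show ?thesis unfolding \<Sigma>_def by simp
    qed
  qed
qed

lemma card_le_sum_divide:
  fixes f :: "'a \<Rightarrow> real"
  assumes "finite K" "G \<subseteq> K" "\<And>k. k \<in> K \<Longrightarrow> 0 \<le> f k" "\<And>k. k \<in> G \<Longrightarrow> t \<le> f k" "t > 0"
  shows "real (card G) \<le> sum f K / t"
proof -
  have "real (card G) * t = (\<Sum>k\<in>G. t)" by simp
  also have "\<dots> \<le> sum f G" using assms(4) by (intro sum_mono) auto
  also have "\<dots> \<le> sum f K" using assms by (intro sum_mono2) auto
  finally show ?thesis using assms(5) by (simp add: le_divide_eq)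
qed

lemma powr_ge_if_between_powr2:
  fixes d H \<epsilon> p :: real and j :: nat
  assumes "2 powr (- (H + \<epsilon>) * real j) \<le> d" "d \<le> 2 powr (- (H - \<epsilon>) * real j)"
  shows "2 powr (- (H * p + \<epsilon> * \<bar>p\<bar>) * real j) \<le> d powr p"
proof (cases "p \<ge> 0")
  case True
  have "2 powr (- (H * p + \<epsilon> * \<bar>p\<bar>) * real j) = (2 powr (- (H + \<epsilon>) * real j)) powr p"
    using True by (simp add: powr_powr algebra_simps)
  also have "\<dots> \<le> d powr p" using True assms(1) by (intro powr_mono2) auto
  finally show ?thesis .
next
  case False
  have "2 powr (- (H * p + \<epsilon> * \<bar>p\<bar>) * real j) = (2 powr (- (H - \<epsilon>) * real j)) powr p"
    using False by (simp add: powr_powr algebra_simps)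
  also have "\<dots> \<le> d powr p" using False assms
    by (intro powr_mono2') (auto intro: less_le_trans[OF _ assms(1)])
  finally show ?thesis .
qed

definition good_positions ::
    "(nat \<Rightarrow> real) \<Rightarrow> (nat \<Rightarrow> real) \<Rightarrow> (nat \<Rightarrow> int \<Rightarrow> complex) \<Rightarrow> real \<Rightarrow> real \<Rightarrow> real \<Rightarrow> real
      \<Rightarrow> nat \<Rightarrow> int set" where
  "good_positions \<theta> \<omega> c a b H \<epsilon> j = {k \<in> sampled_positions \<omega> a b j.
      2 powr (- (H + \<epsilon>) * real j) \<le> leader \<theta> \<omega> c j k \<and>
      leader \<theta> \<omega> c j k \<le> 2 powr (- (H - \<epsilon>) * real j)}"

lemma finite_good_positions: "finite (good_positions \<theta> \<omega> c a b H \<epsilon> j)"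
  unfolding good_positions_def using finite_sampled_positions by simp

lemma card_good_positions_eventually_le:
  assumes "subexp_growth \<omega>" "ereal z < scaling_fun \<theta> \<omega> c a b p"
  shows "eventually (\<lambda>j. real (card (good_positions \<theta> \<omega> c a b H \<epsilon> j))
            \<le> 2 powr ((1 - z + H * p + \<epsilon> * \<bar>p\<bar>) * real j)) sequentially"
  using structure_fun_eventually_le[OF assms]
proof eventually_elim
  case (elim j)
  have "real (card (good_positions \<theta> \<omega> c a b H \<epsilon> j))
      \<le> structure_fun \<theta> \<omega> c a b p j / 2 powr (- (H * p + \<epsilon> * \<bar>p\<bar>) * real j)"
    unfolding structure_fun_eq_sum
  proof (rule card_le_sum_divide[OF finite_sampled_positions])
    show "2 powr (- (H * p + \<epsilon> * \<bar>p\<bar>) * real j) \<le> leader \<theta> \<omega> c j k powr p"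
      if "k \<in> good_positions \<theta> \<omega> c a b H \<epsilon> j" for k
      using that unfolding good_positions_def by (blast intro: powr_ge_if_between_powr2)
  qed (auto simp: good_positions_def)
  also have "\<dots> \<le> 2 powr ((1 - z) * real j) / 2 powr (- (H * p + \<epsilon> * \<bar>p\<bar>) * real j)"
    using elim by (intro divide_right_mono) auto
  also have "\<dots> = 2 powr ((1 - z + H * p + \<epsilon> * \<bar>p\<bar>) * real j)"
    by (simp add: powr_diff[symmetric] algebra_simps)
  finally show ?case .
qed

section \<open>A covering criterion for Hausdorff measure zero\<close>

lemma hausdorff_pre_le_tail_sum:
  fixes G :: "nat \<Rightarrow> int set" and center :: "nat \<Rightarrow> int \<Rightarrow> real" and r :: "nat \<Rightarrow> real"
  assumes fin: "\<And>j. finite (G j)" and r_pos: "\<And>j. r j > 0" and "\<delta> > 0"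
    and small: "\<And>j. j \<ge> J \<Longrightarrow> 2 * r j \<le> \<delta>"
    and summ: "summable (\<lambda>j. real (card (G j)) * (2 * r j) powr s)"
    and cover: "E \<subseteq> (\<Union>j\<in>{J..}. \<Union>k\<in>G j. cball (center j k) (r j))"
  shows "hausdorff_pre s \<delta> E \<le> ennreal (\<Sum>i. real (card (G (i + J))) * (2 * r (i + J)) powr s)"
proof -
  define g where "g j = real (card (G j)) * (2 * r j) powr s" for j
  define h where "h j = (if J \<le> j then g j else 0)" for j
  define V where "V j n = (if J \<le> j \<and> int_decode n \<in> G j
      then cball (center j (int_decode n)) (r j) else {})" for j n
  define U where "U m = V (fst (prod_decode m)) (snd (prod_decode m))" for m
  have V_row: "(\<Sum>n. ennreal (diameter (V j n) powr s)) = ennreal (h j)" for j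
  proof -
    have "n \<in> int_encode ` G j \<longleftrightarrow> int_decode n \<in> G j" for n
      by (metis image_iff int_decode_inverse int_encode_inverse)
    then have "ennreal (diameter (V j n) powr s)
        = (if n \<in> int_encode ` G j then ennreal (if J \<le> j then (2 * r j) powr s else 0) else 0)" for n
      using r_pos[of j] by (auto simp: V_def diameter_cball less_imp_le)
    then have "(\<Sum>n. ennreal (diameter (V j n) powr s))
        = (\<Sum>n\<in>int_encode ` G j. ennreal (if J \<le> j then (2 * r j) powr s else 0))"
      by (subst suminf_finite[of "int_encode ` G j"]) (auto simp: fin)
    also have "\<dots> = ennreal (h j)"
      using card_image[OF inj_on_subset[OF inj_int_encode subset_UNIV], of "G j"]
      by (simp add: h_def g_def ennreal_mult' ennreal_of_nat_eq_real_of_nat)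
    finally show ?thesis .
  qed
  have "E \<subseteq> (\<Union>m. U m)"
  proof
    fix x assume "x \<in> E"
    then obtain j k where "j \<ge> J" "k \<in> G j" "x \<in> cball (center j k) (r j)"
      using cover by blast
    then have "x \<in> U (prod_encode (j, int_encode k))" by (simp add: U_def V_def)
    then show "x \<in> (\<Union>m. U m)" by blast
  qed
  moreover have "bounded (U m) \<and> diameter (U m) \<le> \<delta>" for m
  proof (cases "J \<le> fst (prod_decode m)")
    case True
    then show ?thesis
      using small r_pos \<open>\<delta> > 0\<close> by (simp add: U_def V_def diameter_cball less_imp_le)
  qed (use \<open>\<delta> > 0\<close> in \<open>simp add: U_def V_def\<close>)
  ultimately have "hausdorff_pre s \<delta> E \<le> (\<Sum>m. ennreal (diameter (U m) powr s))"
    unfolding hausdorff_pre_def by (intro INF_lower) blast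
  also have "\<dots> = (\<Sum>j. ennreal (h j))"
    unfolding U_def using V_row
    by (intro suminf_ennreal_2dimen[where f = "\<lambda>(j, n). ennreal (diameter (V j n) powr s)",
          unfolded split_beta]) simp
  also have "\<dots> = ennreal (suminf h)"
    using summ unfolding h_def g_def
    by (intro suminf_ennreal2) (auto intro: summable_comparison_test[OF _ summ])
  also have "suminf h = (\<Sum>i. g (i + J))"
    using suminf_split_initial_segment[of h J] summ unfolding h_def g_def
    by (simp add: summable_comparison_test[OF _ summ])
  finally show ?thesis unfolding g_def .
qed

lemma hausdorff_measure_eq_0_if_covers:
  fixes G :: "nat \<Rightarrow> int set" and center :: "nat \<Rightarrow> int \<Rightarrow> real" and r :: "nat \<Rightarrow> real"
  assumes fin: "\<And>j. finite (G j)"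
    and r_pos: "\<And>j. r j > 0" and r_lim: "r \<longlonglongrightarrow> 0"
    and summ: "summable (\<lambda>j. real (card (G j)) * (2 * r j) powr s)"
    and cover: "\<And>J. E \<subseteq> (\<Union>j\<in>{J..}. \<Union>k\<in>G j. cball (center j k) (r j))"
  shows "hausdorff_measure s E = 0"
proof -
  have pre_small: "hausdorff_pre s \<delta> E \<le> 0 + ennreal e" if "\<delta> > 0" "e > 0" for \<delta> e
  proof -
    obtain J1 where J1: "\<And>j. j \<ge> J1 \<Longrightarrow> 2 * r j \<le> \<delta>"
      using order_tendstoD(2)[OF r_lim, of "\<delta> / 2"] \<open>\<delta> > 0\<close>
      unfolding eventually_sequentially by (force simp: field_simps)
    obtain J2 where J2: "\<And>J. J \<ge> J2 \<Longrightarrow> norm (\<Sum>i. real (card (G (i + J))) * (2 * r (i + J)) powr s) < e"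
      using suminf_exist_split[OF \<open>e > 0\<close> summ] by blast
    have "hausdorff_pre s \<delta> E \<le> ennreal (\<Sum>i. real (card (G (i + max J1 J2))) * (2 * r (i + max J1 J2)) powr s)"
      using J1 by (intro hausdorff_pre_le_tail_sum[OF fin r_pos \<open>\<delta> > 0\<close> _ summ cover]) auto
    also have "\<dots> \<le> ennreal e"
      using J2[of "max J1 J2"] by (intro ennreal_leI) simp
    finally show ?thesis by simp
  qed
  have "hausdorff_pre s \<delta> E = 0" if "\<delta> > 0" for \<delta>
    using ennreal_le_epsilon[of 0 "hausdorff_pre s \<delta> E"] pre_small[OF that] by simp
  then show ?thesis
    unfolding hausdorff_measure_def by (subst SUP_cong[OF refl, of _ _ "\<lambda>_. 0"]) auto
qed

section \<open>Large leaders near points of given weak-scaling exponent\<close>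

lemma weak_scaling_exp_greaterE:
  assumes "ereal s < weak_scaling_exp c x"
  obtains s1 s0 C where "s < s1" "s0 > 0" "C \<ge> 1"
    "\<And>j k. cmod (c j k) \<le> C * 2 powr (- s1 * real j) * (1 + \<bar>2 ^ j * x - real_of_int k\<bar>) powr s0"
proof -
  obtain s1 where "Gamma_space c s1 x" "s < s1"
    using assms unfolding weak_scaling_exp_def less_SUP_iff by auto
  then obtain s0 C where s0: "s0 > 0"
    and C: "\<And>j k. cmod (c j k) \<le> C * 2 powr (- s1 * real j) * (1 + \<bar>2 ^ j * x - real_of_int k\<bar>) powr s0"
    unfolding Gamma_space_def two_microlocal_def by auto
  have "cmod (c j k) \<le> max C 1 * 2 powr (- s1 * real j) * (1 + \<bar>2 ^ j * x - real_of_int k\<bar>) powr s0"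
    for j k using C[of j k] by (smt (verit) mult_right_mono powr_ge_zero mult_nonneg_nonneg)
  with that \<open>s < s1\<close> s0 show ?thesis by (meson max.cobounded2)
qed

lemma weak_scaling_exp_lessE:
  assumes "weak_scaling_exp c x < ereal s" "s' > 0"
  obtains j k where "C * 2 powr (- s * real j) * (1 + \<bar>2 ^ j * x - real_of_int k\<bar>) powr s' < cmod (c j k)"
proof -
  have "\<not> Gamma_space c s x"
  proof
    assume "Gamma_space c s x"
    then have "ereal s \<le> weak_scaling_exp c x"
      unfolding weak_scaling_exp_def by (intro SUP_upper) auto
    with assms(1) show False by simp
  qed
  with assms(2) have "\<not> two_microlocal c s (- s') x" unfolding Gamma_space_def by blast
  then have "\<not> (\<forall>j k. cmod (c j k) \<le> C * 2 powr (- s * real j) * (1 + \<bar>2 ^ j * x - real_of_int k\<bar>) powr s')"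
    unfolding two_microlocal_def by auto
  with that show ?thesis by (meson not_le)
qed

text \<open>A violation of the two-microlocal bound with exponents \<open>H + \<epsilon>\<close>, \<open>-(s0 + 2\<epsilon>/\<eta>)\<close> and
  constant \<open>C 2 powr (2\<epsilon> J)\<close>, played against the valid bound with exponents \<open>s1 > H - \<epsilon>\<close>, \<open>-s0\<close>
  and constant \<open>C\<close>, can only occur at scales \<open>j > J\<close> and at positions \<open>k\<close> with
  \<open>1 + \<bar>2^j x - k\<bar> < 2 powr (\<eta> j)\<close>.\<close>
lemma large_coefficient_near:
  assumes h: "weak_scaling_exp c x = ereal H" and "\<epsilon> > 0" "\<eta> > 0"
    and ub: "\<And>j k. cmod (c j k) \<le> C * 2 powr (- s1 * real j) * (1 + \<bar>2 ^ j * x - real_of_int k\<bar>) powr s0"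
    and "H - \<epsilon> < s1" "C \<ge> 1" "s0 \<ge> 0"
  shows "\<exists>j>J. \<exists>k. 2 powr (- (H + \<epsilon>) * real j) \<le> cmod (c j k)
            \<and> 1 + \<bar>2 ^ j * x - real_of_int k\<bar> < 2 powr (\<eta> * real j)"
proof -
  define \<sigma> where "\<sigma> = 2 * \<epsilon> / \<eta>"
  have "\<sigma> > 0" using assms(2,3) by (simp add: \<sigma>_def)
  obtain j k where viol: "C * 2 powr (2 * \<epsilon> * real J) * 2 powr (- (H + \<epsilon>) * real j)
      * (1 + \<bar>2 ^ j * x - real_of_int k\<bar>) powr (s0 + \<sigma>) < cmod (c j k)"
    using weak_scaling_exp_lessE[of c x "H + \<epsilon>" "s0 + \<sigma>"] h assms(2,7) \<open>\<sigma> > 0\<close> by auto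
  define P where "P = 1 + \<bar>2 ^ j * x - real_of_int k\<bar>"
  have "P \<ge> 1" by (simp add: P_def)
  define Q where "Q = 2 powr (2 * \<epsilon> * real J) * 2 powr (- (H + \<epsilon>) * real j)"
  have "C * P powr s0 * (Q * P powr \<sigma>) = C * Q * P powr (s0 + \<sigma>)"
    by (simp add: powr_add mult_ac)
  also have "\<dots> < C * P powr s0 * 2 powr (- s1 * real j)"
    using viol ub[of j k] unfolding P_def[symmetric] Q_def by (simp add: mult_ac)
  finally have "Q * P powr \<sigma> < 2 powr (- s1 * real j)"
    using \<open>P \<ge> 1\<close> \<open>C \<ge> 1\<close> by (subst (asm) mult_less_cancel_left_pos) auto
  then have "2 powr (2 * \<epsilon> * real J) * P powr \<sigma> < 2 powr (- s1 * real j) / 2 powr (- (H + \<epsilon>) * real j)"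
    by (simp add: Q_def field_simps)
  also have "\<dots> = 2 powr ((H + \<epsilon> - s1) * real j)"
    by (simp add: powr_diff[symmetric] algebra_simps)
  also have "\<dots> \<le> 2 powr (2 * \<epsilon> * real j)"
    using \<open>H - \<epsilon> < s1\<close> by (intro powr_mono mult_right_mono) auto
  finally have key: "2 powr (2 * \<epsilon> * real J) * P powr \<sigma> < 2 powr (2 * \<epsilon> * real j)" .
  have "1 \<le> P powr \<sigma>" "1 \<le> 2 powr (2 * \<epsilon> * real J)"
    using \<open>P \<ge> 1\<close> \<open>\<sigma> > 0\<close> \<open>\<epsilon> > 0\<close> by (auto intro: ge_one_powr_ge_zero)
  then have "2 powr (2 * \<epsilon> * real J) \<le> 2 powr (2 * \<epsilon> * real J) * P powr \<sigma>"
    and "P powr \<sigma> \<le> 2 powr (2 * \<epsilon> * real J) * P powr \<sigma>"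
    by (simp_all add: mult_le_cancel_right1)
  with key have "2 powr (2 * \<epsilon> * real J) < 2 powr (2 * \<epsilon> * real j)"
    and P_less: "P powr \<sigma> < 2 powr (2 * \<epsilon> * real j)"
    by linarith+
  then have "J < j" using \<open>\<epsilon> > 0\<close> by simp
  moreover have "P < 2 powr (\<eta> * real j)"
  proof (rule ccontr)
    assume "\<not> P < 2 powr (\<eta> * real j)"
    then have "(2 powr (\<eta> * real j)) powr \<sigma> \<le> P powr \<sigma>"
      using \<open>\<sigma> > 0\<close> by (intro powr_mono2) auto
    then show False using P_less assms(3) by (simp add: powr_powr \<sigma>_def mult.commute)
  qed
  moreover have "2 powr (- (H + \<epsilon>) * real j) \<le> cmod (c j k)"
  proof -
    have "1 * 1 * 2 powr (- (H + \<epsilon>) * real j) * 1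
        \<le> C * 2 powr (2 * \<epsilon> * real J) * 2 powr (- (H + \<epsilon>) * real j) * P powr (s0 + \<sigma>)"
      using \<open>C \<ge> 1\<close> \<open>P \<ge> 1\<close> \<open>s0 \<ge> 0\<close> \<open>\<sigma> > 0\<close> \<open>\<epsilon> > 0\<close>
      by (intro mult_mono ge_one_powr_ge_zero) auto
    then show ?thesis using viol unfolding P_def by linarith
  qed
  ultimately show ?thesis unfolding P_def by blast
qed

lemma exists_multiple_floor_near:
  fixes w :: real and k :: int
  assumes "w \<ge> 1"
  shows "\<exists>l::int. \<bar>real_of_int k - real_of_int (l * \<lfloor>2 * w\<rfloor>)\<bar> \<le> w"
proof -
  define m where "m = \<lfloor>2 * w\<rfloor>"
  have "m > 0" "real_of_int m \<le> 2 * w" using assms by (auto simp: m_def)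
  define l where "l = (2 * k + m) div (2 * m)"
  have "0 \<le> (2 * k + m) mod (2 * m)" "(2 * k + m) mod (2 * m) < 2 * m" using \<open>m > 0\<close> by simp_all
  moreover have "2 * k + m = 2 * m * l + (2 * k + m) mod (2 * m)" by (simp add: l_def)
  ultimately have "\<bar>2 * (k - l * m)\<bar> \<le> m" by (simp add: algebra_simps abs_le_iff)
  then have "real_of_int \<bar>2 * (k - l * m)\<bar> \<le> 2 * w"
    using \<open>real_of_int m \<le> 2 * w\<close> of_int_le_iff order_trans by blast
  then have "\<bar>real_of_int k - real_of_int (l * m)\<bar> \<le> w" by simp
  then show ?thesis unfolding m_def by blast
qed

lemma leader_le:
  assumes "nbhd \<theta> \<omega> j k \<noteq> {}" "\<And>j' k'. (j', k') \<in> nbhd \<theta> \<omega> j k \<Longrightarrow> cmod (c j' k') \<le> B"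
  shows "leader \<theta> \<omega> c j k \<le> B"
  unfolding leader_def using assms by (intro cSUP_least) auto

lemma le_leader:
  assumes "(j', k') \<in> nbhd \<theta> \<omega> j k"
    and "\<And>j' k'. (j', k') \<in> nbhd \<theta> \<omega> j k \<Longrightarrow> cmod (c j' k') \<le> B"
  shows "cmod (c j' k') \<le> leader \<theta> \<omega> c j k"
proof -
  have "bdd_above ((\<lambda>jk. cmod (c (fst jk) (snd jk))) ` nbhd \<theta> \<omega> j k)"
    using assms(2) by (intro bdd_aboveI2[of _ _ B]) auto
  then show ?thesis
    unfolding leader_def using cSUP_upper[OF assms(1), of "\<lambda>jk. cmod (c (fst jk) (snd jk))"] by simp
qed

lemma mem_nbhd_same_scale:
  assumes "real j \<le> \<theta> j" "\<bar>real_of_int k - real_of_int k'\<bar> \<le> \<omega> j"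
  shows "(j, k') \<in> nbhd \<theta> \<omega> j k"
proof -
  have "\<bar>real_of_int k / 2 ^ j - real_of_int k' / 2 ^ j\<bar> = \<bar>real_of_int k - real_of_int k'\<bar> / 2 ^ j"
    by (simp add: diff_divide_distrib[symmetric])
  then show ?thesis using assms by (simp add: nbhd_def divide_right_mono)
qed

lemma two_microlocal_bound_on_nbhd:
  assumes ub: "\<And>j k. cmod (c j k) \<le> C * 2 powr (- s1 * real j) * (1 + \<bar>2 ^ j * x - real_of_int k\<bar>) powr s0"
    and "C \<ge> 0" "s0 \<ge> 0" "mono \<omega>"
    and R: "\<bar>2 ^ j * x - real_of_int k\<bar> \<le> R" and jk': "(j', k') \<in> nbhd \<theta> \<omega> j k"
  shows "cmod (c j' k') \<le> C * 2 powr (- s1 * real j + \<bar>s1\<bar> * (\<theta> j - real j))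
      * (2 powr (\<theta> j - real j) * (1 + R + \<omega> (nat \<lfloor>\<theta> j\<rfloor>))) powr s0"
proof -
  define T where "T = real j' - real j"
  from jk' have "j \<le> j'" "real j' \<le> \<theta> j"
    and near: "\<bar>real_of_int k / 2 ^ j - real_of_int k' / 2 ^ j'\<bar> \<le> \<omega> j' / 2 ^ j"
    unfolding nbhd_def by auto
  then have T: "0 \<le> T" "T \<le> \<theta> j - real j" by (auto simp: T_def)
  have "j' \<le> nat \<lfloor>\<theta> j\<rfloor>" using \<open>real j' \<le> \<theta> j\<close> by (simp add: le_nat_iff le_floor_iff)
  then have \<omega>_le: "\<omega> j' \<le> \<omega> (nat \<lfloor>\<theta> j\<rfloor>)" using \<open>mono \<omega>\<close> by (simp add: monoD)
  have scale: "(2::real) ^ j' = 2 powr T * 2 ^ j"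
    by (simp add: T_def powr_diff powr_realpow[symmetric])
  have abs_scaled: "\<bar>2 ^ i * x - real_of_int m\<bar> = 2 ^ i * \<bar>x - real_of_int m / 2 ^ i\<bar>" for i m
  proof -
    have "2 ^ i * x - real_of_int m = 2 ^ i * (x - real_of_int m / 2 ^ i)" by (simp add: field_simps)
    then show ?thesis by (simp add: abs_mult)
  qed
  have "\<bar>x - real_of_int k' / 2 ^ j'\<bar>
      \<le> \<bar>x - real_of_int k / 2 ^ j\<bar> + \<bar>real_of_int k / 2 ^ j - real_of_int k' / 2 ^ j'\<bar>"
    by arith
  also have "\<dots> \<le> R / 2 ^ j + \<omega> j' / 2 ^ j"
    using R near abs_scaled[of j k] by (intro add_mono) (simp_all add: field_simps)
  finally have "\<bar>2 ^ j' * x - real_of_int k'\<bar> \<le> 2 ^ j' * ((R + \<omega> j') / 2 ^ j)"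
    unfolding abs_scaled[of j' k'] by (simp add: add_divide_distrib)
  also have "\<dots> = 2 powr T * (R + \<omega> j')" by (simp add: scale)
  also have "\<dots> \<le> 2 powr T * (R + \<omega> (nat \<lfloor>\<theta> j\<rfloor>))" using \<omega>_le by simp
  finally have "1 + \<bar>2 ^ j' * x - real_of_int k'\<bar> \<le> 2 powr T * (1 + R + \<omega> (nat \<lfloor>\<theta> j\<rfloor>))"
    using ge_one_powr_ge_zero[of 2 T] T(1) by (simp add: distrib_left)
  also have "\<dots> \<le> 2 powr (\<theta> j - real j) * (1 + R + \<omega> (nat \<lfloor>\<theta> j\<rfloor>))"
  proof (rule mult_right_mono)
    have "0 \<le> \<omega> j' / 2 ^ j" using near abs_ge_zero order_trans by blast
    then have "0 \<le> \<omega> j'" using mult_nonneg_nonneg[of _ "2 ^ j"] by fastforce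
    then show "0 \<le> 1 + R + \<omega> (nat \<lfloor>\<theta> j\<rfloor>)" using R \<omega>_le by linarith
  qed (use T(2) in simp)
  finally have P: "(1 + \<bar>2 ^ j' * x - real_of_int k'\<bar>) powr s0
      \<le> (2 powr (\<theta> j - real j) * (1 + R + \<omega> (nat \<lfloor>\<theta> j\<rfloor>))) powr s0"
    using \<open>s0 \<ge> 0\<close> by (intro powr_mono2) auto
  have "- s1 * T \<le> \<bar>s1\<bar> * T" using T(1) by (intro mult_right_mono) auto
  also have "\<dots> \<le> \<bar>s1\<bar> * (\<theta> j - real j)" using T(2) by (intro mult_left_mono) auto
  finally have e: "2 powr (- s1 * real j') \<le> 2 powr (- s1 * real j + \<bar>s1\<bar> * (\<theta> j - real j))"
    by (simp add: T_def algebra_simps)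
  have "cmod (c j' k') \<le> C * 2 powr (- s1 * real j') * (1 + \<bar>2 ^ j' * x - real_of_int k'\<bar>) powr s0"
    by (rule ub)
  also have "\<dots> \<le> C * 2 powr (- s1 * real j + \<bar>s1\<bar> * (\<theta> j - real j))
      * (2 powr (\<theta> j - real j) * (1 + R + \<omega> (nat \<lfloor>\<theta> j\<rfloor>))) powr s0"
    using e P \<open>C \<ge> 0\<close> by (intro mult_mono mult_left_mono) auto
  finally show ?thesis .
qed

lemma eventually_nbhd_bound_le:
  assumes "subpoly_growth \<theta>" "subexp_growth \<omega>" "C \<ge> 0" "s0 \<ge> 0" "\<eta> \<ge> 0" "\<gamma> > 0"
  shows "eventually (\<lambda>j. C * 2 powr (- s1 * real j + \<bar>s1\<bar> * (\<theta> j - real j))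
      * (2 powr (\<theta> j - real j) * (1 + 2 * 2 powr (\<eta> * real j) + \<omega> (nat \<lfloor>\<theta> j\<rfloor>))) powr s0
    \<le> 2 powr ((- s1 + s0 * \<eta> + \<gamma>) * real j)) sequentially"
proof -
  define \<delta> where "\<delta> = \<gamma> / (1 + \<bar>s1\<bar> + 2 * s0)"
  have "\<delta> > 0" and \<delta>: "\<delta> * (1 + \<bar>s1\<bar> + 2 * s0) = \<gamma>"
    using assms(4,6) by (simp_all add: \<delta>_def add_pos_nonneg)
  from subpoly_growth_eventually_le[OF assms(1) \<open>\<delta> > 0\<close>]
    subexp_subpoly_eventually_le[OF assms(1,2) \<open>\<delta> > 0\<close>]
    eventually_le_powr2_mult[OF \<open>\<delta> > 0\<close>, of "C * 4 powr s0"]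
  show ?thesis
  proof eventually_elim
    case (elim j)
    define T where "T = \<theta> j - real j"
    have "0 \<le> T" using assms(1) by (simp add: T_def subpoly_growth_def)
    have "1 + 2 * 2 powr (\<eta> * real j) + \<omega> (nat \<lfloor>\<theta> j\<rfloor>) \<le> 4 * 2 powr ((\<eta> + \<delta>) * real j)"
    proof -
      have "1 \<le> 2 powr ((\<eta> + \<delta>) * real j)" "2 powr (\<eta> * real j) \<le> 2 powr ((\<eta> + \<delta>) * real j)"
        "2 powr (\<delta> * real j) \<le> 2 powr ((\<eta> + \<delta>) * real j)"
        using assms(5) \<open>\<delta> > 0\<close> by (auto intro!: ge_one_powr_ge_zero mult_right_mono)
      then show ?thesis using elim(2) by linarith
    qed
    then have "2 powr T * (1 + 2 * 2 powr (\<eta> * real j) + \<omega> (nat \<lfloor>\<theta> j\<rfloor>))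
        \<le> 2 powr (\<delta> * real j) * (4 * 2 powr ((\<eta> + \<delta>) * real j))"
      using elim(1) assms(2) by (intro mult_mono) (auto simp: T_def subexp_growth_def less_imp_le)
    also have "\<dots> = 4 * 2 powr ((\<eta> + 2 * \<delta>) * real j)"
      by (simp add: powr_add[symmetric] algebra_simps)
    finally have "(2 powr T * (1 + 2 * 2 powr (\<eta> * real j) + \<omega> (nat \<lfloor>\<theta> j\<rfloor>))) powr s0
        \<le> (4 * 2 powr ((\<eta> + 2 * \<delta>) * real j)) powr s0"
      using assms(2,4) by (intro powr_mono2) (auto simp: subexp_growth_def less_imp_le)
    also have "\<dots> = 4 powr s0 * 2 powr (s0 * (\<eta> + 2 * \<delta>) * real j)"
      by (simp add: powr_mult powr_powr mult_ac)
    finally have P: "(2 powr T * (1 + 2 * 2 powr (\<eta> * real j) + \<omega> (nat \<lfloor>\<theta> j\<rfloor>))) powr s0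
        \<le> 4 powr s0 * 2 powr (s0 * (\<eta> + 2 * \<delta>) * real j)" .
    have "\<bar>s1\<bar> * T \<le> \<bar>s1\<bar> * (\<delta> * real j)"
      using elim(1) by (intro mult_left_mono) (auto simp: T_def)
    then have E: "2 powr (- s1 * real j + \<bar>s1\<bar> * T) \<le> 2 powr ((- s1 + \<bar>s1\<bar> * \<delta>) * real j)"
      by (simp add: algebra_simps)
    have "C * 2 powr (- s1 * real j + \<bar>s1\<bar> * T)
        * (2 powr T * (1 + 2 * 2 powr (\<eta> * real j) + \<omega> (nat \<lfloor>\<theta> j\<rfloor>))) powr s0
      \<le> C * 2 powr ((- s1 + \<bar>s1\<bar> * \<delta>) * real j) * (4 powr s0 * 2 powr (s0 * (\<eta> + 2 * \<delta>) * real j))"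
      using P E assms(3) by (intro mult_mono mult_left_mono) auto
    also have "\<dots> = (C * 4 powr s0) * 2 powr ((- s1 + \<bar>s1\<bar> * \<delta> + s0 * (\<eta> + 2 * \<delta>)) * real j)"
      by (simp add: powr_add[symmetric] algebra_simps)
    also have "\<dots> \<le> 2 powr (\<delta> * real j) * 2 powr ((- s1 + \<bar>s1\<bar> * \<delta> + s0 * (\<eta> + 2 * \<delta>)) * real j)"
      using elim(3) by (intro mult_right_mono) auto
    also have "\<dots> = 2 powr ((- s1 + s0 * \<eta> + \<gamma>) * real j)"
      unfolding \<delta>[symmetric] by (simp add: powr_add[symmetric] algebra_simps)
    finally show ?case unfolding T_def .
  qed
qed

lemma good_position_if_large_coefficient:
  assumes ub: "\<And>j k. cmod (c j k) \<le> C * 2 powr (- s1 * real j) * (1 + \<bar>2 ^ j * x - real_of_int k\<bar>) powr s0"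
    and "C \<ge> 0" "s0 \<ge> 0" "mono \<omega>" "real j \<le> \<theta> j"
    and big: "2 powr (- (H + \<epsilon>) * real j) \<le> cmod (c j k)"
    and "\<bar>real_of_int k - real_of_int ks\<bar> \<le> \<omega> j" and R: "\<bar>2 ^ j * x - real_of_int ks\<bar> \<le> R"
    and bound: "C * 2 powr (- s1 * real j + \<bar>s1\<bar> * (\<theta> j - real j))
      * (2 powr (\<theta> j - real j) * (1 + R + \<omega> (nat \<lfloor>\<theta> j\<rfloor>))) powr s0 \<le> 2 powr (- (H - \<epsilon>) * real j)"
    and "ks \<in> sampled_positions \<omega> a b j"
  shows "ks \<in> good_positions \<theta> \<omega> c a b H \<epsilon> j"
proof -
  have jk: "(j, k) \<in> nbhd \<theta> \<omega> j ks"
    using assms(5,7) by (intro mem_nbhd_same_scale) (auto simp: abs_minus_commute)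
  have nb: "cmod (c j' k') \<le> 2 powr (- (H - \<epsilon>) * real j)" if "(j', k') \<in> nbhd \<theta> \<omega> j ks" for j' k'
    using two_microlocal_bound_on_nbhd[OF ub assms(2-4) R that] bound by linarith
  have "leader \<theta> \<omega> c j ks \<le> 2 powr (- (H - \<epsilon>) * real j)"
    using jk nb by (intro leader_le) auto
  moreover have "cmod (c j k) \<le> leader \<theta> \<omega> c j ks"
    by (rule le_leader[OF jk nb])
  ultimately show ?thesis
    using big \<open>ks \<in> sampled_positions \<omega> a b j\<close> unfolding good_positions_def by auto
qed

lemma abs_diff_divide_pow2_le:
  assumes "\<bar>2 ^ j * x - real_of_int k\<bar> \<le> 2 * 2 powr (\<eta> * real j)"
  shows "\<bar>x - real_of_int k / 2 ^ j\<bar> \<le> 2 * 2 powr ((\<eta> - 1) * real j)"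
proof -
  have "x - real_of_int k / 2 ^ j = (2 ^ j * x - real_of_int k) / 2 ^ j"
    by (simp add: field_simps)
  then have "\<bar>x - real_of_int k / 2 ^ j\<bar> = \<bar>2 ^ j * x - real_of_int k\<bar> / 2 ^ j"
    unfolding abs_divide by simp
  also have "\<dots> \<le> 2 * 2 powr (\<eta> * real j) / 2 powr real j"
    using assms by (simp add: divide_right_mono powr_realpow)
  finally show ?thesis by (simp add: powr_diff algebra_simps)
qed

lemma exists_good_position_near:
  assumes \<theta>: "subpoly_growth \<theta>" and \<omega>: "subexp_growth \<omega>"
    and "a < x" "x < b" and h: "weak_scaling_exp c x = ereal H" and "\<epsilon> > 0" "\<eta> > 0"
  shows "\<exists>j\<ge>J. \<exists>k\<in>good_positions \<theta> \<omega> c a b H \<epsilon> j.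
           \<bar>x - real_of_int k / 2 ^ j\<bar> \<le> 2 * 2 powr ((\<eta> - 1) * real j)"
proof -
  obtain s1 s0 C where s1: "H - \<epsilon> / 2 < s1" and "s0 > 0" "C \<ge> 1"
    and ub: "\<And>j k. cmod (c j k) \<le> C * 2 powr (- s1 * real j) * (1 + \<bar>2 ^ j * x - real_of_int k\<bar>) powr s0"
    using weak_scaling_exp_greaterE[of "H - \<epsilon> / 2" c x] h \<open>\<epsilon> > 0\<close> by auto
  define \<eta>' where "\<eta>' = min (min \<eta> (1 / 2)) (\<epsilon> / (8 * s0))"
  have "\<eta>' > 0" "\<eta>' \<le> \<eta>" "\<eta>' < 1" "\<eta>' \<le> \<epsilon> / (8 * s0)"
    using \<open>\<eta> > 0\<close> \<open>\<epsilon> > 0\<close> \<open>s0 > 0\<close> by (auto simp: \<eta>'_def)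
  then have "s0 * \<eta>' \<le> \<epsilon> / 8" using \<open>s0 > 0\<close> by (simp add: le_divide_eq mult.commute)
  define R where "R j = 2 * 2 powr (\<eta>' * real j)" for j :: nat
  define B where "B j = C * 2 powr (- s1 * real j + \<bar>s1\<bar> * (\<theta> j - real j))
      * (2 powr (\<theta> j - real j) * (1 + R j + \<omega> (nat \<lfloor>\<theta> j\<rfloor>))) powr s0" for j
  have exponent_le: "2 powr ((- s1 + s0 * \<eta>' + \<epsilon> / 8) * real j) \<le> 2 powr (- (H - \<epsilon>) * real j)" for j
    using s1 \<open>s0 * \<eta>' \<le> \<epsilon> / 8\<close> \<open>\<epsilon> > 0\<close> by (intro powr_mono mult_right_mono) auto
  have "eventually (\<lambda>j. B j \<le> 2 powr ((- s1 + s0 * \<eta>' + \<epsilon> / 8) * real j)) sequentially"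
    unfolding B_def R_def using \<open>C \<ge> 1\<close> \<open>s0 > 0\<close> \<open>\<eta>' > 0\<close> \<open>\<epsilon> > 0\<close>
    by (intro eventually_nbhd_bound_le[OF \<theta> \<omega>]) auto
  moreover have "eventually (\<lambda>j. 2 * 2 powr ((\<eta>' - 1) * real j) < min (x - a) (b - x)) sequentially"
    using order_tendstoD(2)[OF powr2_mult_tendsto_0[of "\<eta>' - 1"], of "min (x - a) (b - x) / 2"]
      \<open>\<eta>' < 1\<close> \<open>a < x\<close> \<open>x < b\<close> by (auto elim!: eventually_mono)
  ultimately have "eventually (\<lambda>j. 1 \<le> \<omega> j \<and> \<omega> j \<le> 2 powr (\<eta>' * real j) \<and>
      B j \<le> 2 powr (- (H - \<epsilon>) * real j) \<and> 2 * 2 powr ((\<eta>' - 1) * real j) < min (x - a) (b - x))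
      sequentially"
    using subexp_growth_eventually_ge_1[OF \<omega>] subexp_growth_eventually_le[OF \<omega> \<open>\<eta>' > 0\<close>]
    by eventually_elim (use exponent_le in \<open>blast intro: order_trans\<close>)
  then obtain N where N: "\<And>j. j \<ge> N \<Longrightarrow> 1 \<le> \<omega> j \<and> \<omega> j \<le> 2 powr (\<eta>' * real j) \<and>
      B j \<le> 2 powr (- (H - \<epsilon>) * real j) \<and> 2 * 2 powr ((\<eta>' - 1) * real j) < min (x - a) (b - x)"
    unfolding eventually_sequentially by blast
  obtain j k where "j > max J N" and big: "2 powr (- (H + \<epsilon>) * real j) \<le> cmod (c j k)"
    and P: "1 + \<bar>2 ^ j * x - real_of_int k\<bar> < 2 powr (\<eta>' * real j)"
    using large_coefficient_near[OF h \<open>\<epsilon> > 0\<close> \<open>\<eta>' > 0\<close> ub _ \<open>C \<ge> 1\<close>, of "max J N"] s1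
      \<open>\<epsilon> > 0\<close> \<open>s0 > 0\<close> by auto
  then have Nj: "1 \<le> \<omega> j" "\<omega> j \<le> 2 powr (\<eta>' * real j)" using N[of j] by auto
  obtain l where l: "\<bar>real_of_int k - real_of_int (l * \<lfloor>2 * \<omega> j\<rfloor>)\<bar> \<le> \<omega> j"
    using exists_multiple_floor_near[OF Nj(1)] by blast
  define ks where "ks = l * \<lfloor>2 * \<omega> j\<rfloor>"
  have R: "\<bar>2 ^ j * x - real_of_int ks\<bar> \<le> R j"
    using P l Nj(2) unfolding ks_def R_def by linarith
  then have near: "\<bar>x - real_of_int ks / 2 ^ j\<bar> \<le> 2 * 2 powr ((\<eta>' - 1) * real j)"
    unfolding R_def by (rule abs_diff_divide_pow2_le)
  then have "ks \<in> sampled_positions \<omega> a b j"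
    using N[of j] \<open>j > max J N\<close> by (auto simp: sampled_positions_def ks_def abs_le_iff)
  then have "ks \<in> good_positions \<theta> \<omega> c a b H \<epsilon> j"
    using good_position_if_large_coefficient[OF ub _ _ _ _ big _ R] N[of j] \<open>j > max J N\<close>
      \<theta> \<omega> l \<open>C \<ge> 1\<close> \<open>s0 > 0\<close> by (auto simp: B_def ks_def subpoly_growth_def subexp_growth_def)
  moreover have "2 powr ((\<eta>' - 1) * real j) \<le> 2 powr ((\<eta> - 1) * real j)"
    using \<open>\<eta>' \<le> \<eta>\<close> by (intro powr_mono mult_right_mono) auto
  then have "\<bar>x - real_of_int ks / 2 ^ j\<bar> \<le> 2 * 2 powr ((\<eta> - 1) * real j)"
    using near by linarith
  ultimately show ?thesis using \<open>j > max J N\<close> by (intro exI[of _ j]) auto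
qed

section \<open>The multifractal formalism inequality\<close>

lemma ereal_diff_add_one_lessE:
  assumes "ereal u - Z + 1 < ereal s"
  obtains z where "ereal z < Z" "u - z + 1 < s"
proof (cases Z)
  case (real w)
  define z where "z = w - (s - (u - w + 1)) / 2"
  have "u - w + 1 < s" using assms real by simp
  then have "ereal z < Z" "u - z + 1 < s" using real by (simp_all add: z_def field_simps)
  then show ?thesis by (rule that)
next
  case PInf
  then show ?thesis using that[of "u + 2 - s"] by simp
qed (use assms in simp)

lemma weak_scaling_level_set_empty:
  assumes \<theta>: "subpoly_growth \<theta>" and \<omega>: "subexp_growth \<omega>"
    and "ereal (H * p) - scaling_fun \<theta> \<omega> c a b p + 1 < 0"
  shows "{x \<in> {a<..<b}. weak_scaling_exp c x = ereal H} = {}"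
proof -
  obtain z where z: "ereal z < scaling_fun \<theta> \<omega> c a b p" "H * p - z + 1 < 0"
    using ereal_diff_add_one_lessE[of "H * p" _ 0] assms(3) by (metis zero_ereal_def)
  define w where "w = \<bar>p\<bar> + 1"
  define \<epsilon> where "\<epsilon> = - (H * p - z + 1) / 2 / w"
  have "w > 0" by (simp add: w_def add_nonneg_pos)
  then have "\<epsilon> > 0" using z(2) by (simp add: \<epsilon>_def)
  have "\<epsilon> * \<bar>p\<bar> \<le> \<epsilon> * w" using \<open>\<epsilon> > 0\<close> by (simp add: w_def)
  also have "\<dots> = - (H * p - z + 1) / 2" using \<open>w > 0\<close> by (simp add: \<epsilon>_def)
  finally have A: "1 - z + H * p + \<epsilon> * \<bar>p\<bar> < 0" using z(2) by (simp add: field_simps)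
  obtain N where N: "\<And>j. j \<ge> N \<Longrightarrow> real (card (good_positions \<theta> \<omega> c a b H \<epsilon> j))
      \<le> 2 powr ((1 - z + H * p + \<epsilon> * \<bar>p\<bar>) * real j)"
    using card_good_positions_eventually_le[OF \<omega> z(1)] unfolding eventually_sequentially by blast
  have "good_positions \<theta> \<omega> c a b H \<epsilon> j = {}" if "j \<ge> max N 1" for j
  proof -
    have "2 powr ((1 - z + H * p + \<epsilon> * \<bar>p\<bar>) * real j) < 1"
      using A that by (simp add: powr_less_one mult_neg_pos)
    then have "card (good_positions \<theta> \<omega> c a b H \<epsilon> j) = 0" using N[of j] that by simp
    then show ?thesis using finite_good_positions by simp
  qed
  then show ?thesis
    using exists_good_position_near[OF \<theta> \<omega> _ _ _ \<open>\<epsilon> > 0\<close> zero_less_one, of a _ b c H "max N 1"]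
    by fastforce
qed

lemma summable_card_good_positions:
  assumes \<omega>: "subexp_growth \<omega>" and z: "ereal z < scaling_fun \<theta> \<omega> c a b p"
    and q: "1 - z + H * p + \<epsilon> * \<bar>p\<bar> + (\<eta> - 1) * s < 0"
  shows "summable (\<lambda>j. real (card (good_positions \<theta> \<omega> c a b H \<epsilon> j))
            * (2 * (2 * 2 powr ((\<eta> - 1) * real j))) powr s)"
proof (rule summable_comparison_test_ev)
  define q where "q = 1 - z + H * p + \<epsilon> * \<bar>p\<bar> + (\<eta> - 1) * s"
  show "summable (\<lambda>j. 4 powr s * (2 powr q) ^ j)"
    using q by (intro summable_mult summable_geometric) (simp add: q_def powr_less_one)
  show "eventually (\<lambda>j. norm (real (card (good_positions \<theta> \<omega> c a b H \<epsilon> j))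
      * (2 * (2 * 2 powr ((\<eta> - 1) * real j))) powr s) \<le> 4 powr s * (2 powr q) ^ j) sequentially"
    using card_good_positions_eventually_le[OF \<omega> z, of H \<epsilon>]
  proof eventually_elim
    case (elim j)
    have "(2 * (2 * 2 powr ((\<eta> - 1) * real j))) powr s = 4 powr s * 2 powr ((\<eta> - 1) * s * real j)"
      by (simp add: powr_mult powr_powr mult_ac)
    then have "real (card (good_positions \<theta> \<omega> c a b H \<epsilon> j)) * (2 * (2 * 2 powr ((\<eta> - 1) * real j))) powr s
        \<le> 2 powr ((1 - z + H * p + \<epsilon> * \<bar>p\<bar>) * real j) * (4 powr s * 2 powr ((\<eta> - 1) * s * real j))"
      using elim by (metis mult_right_mono powr_ge_zero)
    also have "\<dots> = 4 powr s * 2 powr (q * real j)"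
      unfolding q_def by (simp add: powr_add[symmetric] algebra_simps)
    also have "\<dots> = 4 powr s * (2 powr q) ^ j"
      by (simp add: powr_powr powr_realpow[symmetric])
    finally show ?case by simp
  qed
qed

lemma hausdorff_measure_weak_scaling_level_set:
  assumes \<theta>: "subpoly_growth \<theta>" and \<omega>: "subexp_growth \<omega>" and "s \<ge> 0"
    and "ereal (H * p) - scaling_fun \<theta> \<omega> c a b p + 1 < ereal s"
  shows "hausdorff_measure s {x \<in> {a<..<b}. weak_scaling_exp c x = ereal H} = 0"
proof -
  obtain z where z: "ereal z < scaling_fun \<theta> \<omega> c a b p" "H * p - z + 1 < s"
    using ereal_diff_add_one_lessE assms(4) by blast
  define gap where "gap = s - (H * p - z + 1)"
  define w where "w = \<bar>p\<bar> + s + 1"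
  define t where "t = min (1 / 2) (gap / 2 / w)"
  have "gap > 0" using z(2) by (simp add: gap_def)
  moreover have "w > 0" using \<open>s \<ge> 0\<close> by (simp add: w_def add_nonneg_pos)
  ultimately have "t > 0" "t < 1" by (auto simp: t_def)
  have "t * (\<bar>p\<bar> + s) \<le> gap / 2 / w * w"
    using \<open>t > 0\<close> \<open>s \<ge> 0\<close> \<open>gap > 0\<close> \<open>w > 0\<close> by (intro mult_mono) (auto simp: t_def w_def)
  also have "\<dots> = gap / 2" using \<open>w > 0\<close> by simp
  finally have "1 - z + H * p + t * \<bar>p\<bar> + (t - 1) * s < 0"
    using \<open>gap > 0\<close> by (simp add: gap_def algebra_simps)
  show ?thesis
  proof (rule hausdorff_measure_eq_0_if_covers[where center = "\<lambda>j k. real_of_int k / 2 ^ j"])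
    show "(\<lambda>j. 2 * 2 powr ((t - 1) * real j)) \<longlonglongrightarrow> 0"
      using powr2_mult_tendsto_0[of "t - 1"] \<open>t < 1\<close> by (simp add: tendsto_mult_right_zero)
    show "{x \<in> {a<..<b}. weak_scaling_exp c x = ereal H} \<subseteq> (\<Union>j\<in>{J..}.
        \<Union>k\<in>good_positions \<theta> \<omega> c a b H t j. cball (real_of_int k / 2 ^ j) (2 * 2 powr ((t - 1) * real j)))"
      for J
      using exists_good_position_near[OF \<theta> \<omega> _ _ _ \<open>t > 0\<close> \<open>t > 0\<close>, of a _ b c H J]
      by (fastforce simp: dist_real_def abs_minus_commute)
  qed (use summable_card_good_positions[OF \<omega> z(1)] \<open>1 - z + H * p + t * \<bar>p\<bar> + (t - 1) * s < 0\<close>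
      in \<open>auto simp: finite_good_positions\<close>)
qed

lemma hausdorff_dim_weak_scaling_level_set_le:
  assumes \<theta>: "subpoly_growth \<theta>" and \<omega>: "subexp_growth \<omega>"
  shows "hausdorff_dim {x \<in> {a<..<b}. weak_scaling_exp c x = ereal H}
           \<le> ereal (H * p) - scaling_fun \<theta> \<omega> c a b p + 1"
    (is "hausdorff_dim ?E \<le> ?R")
proof (cases "?E = {}")
  case False
  have dim_le: "hausdorff_dim ?E \<le> ereal s" if "?R < ereal s" for s
  proof (cases "s \<ge> 0")
    case True
    then have "hausdorff_measure s ?E = 0"
      using hausdorff_measure_weak_scaling_level_set[OF \<theta> \<omega>] that by blast
    with True have "(INF s \<in> {s. 0 \<le> s \<and> hausdorff_measure s ?E = 0}. ereal s) \<le> ereal s"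
      by (intro INF_lower) simp
    then show ?thesis unfolding hausdorff_dim_def using \<open>?E \<noteq> {}\<close> by simp
  next
    case False
    then have "ereal s < 0" by simp
    with that have "?R < 0" by (rule less_trans)
    then show ?thesis using weak_scaling_level_set_empty[OF \<theta> \<omega>] \<open>?E \<noteq> {}\<close> by blast
  qed
  show ?thesis
  proof (rule dense_ge)
    fix y assume "?R < y"
    then obtain s where "?R < ereal s" "ereal s < y" using ereal_dense2 by blast
    then show "hausdorff_dim ?E \<le> y" using dim_le[of s] by simp
  qed
qed (simp add: hausdorff_dim_def)

theorem mainTheorem2:
  fixes \<psi> :: "real \<Rightarrow> real"
    and f :: "(real \<Rightarrow> complex) \<Rightarrow> complex"
    and \<theta> \<omega> :: "nat \<Rightarrow> real"
    and a b :: real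
  assumes psi_smooth: "schwartz_real \<psi>"
    and psi_basis: "orthonormal_wavelet \<psi>"
    and f_temp: "tempered_distribution f"
    and theta: "subpoly_growth \<theta>"
    and omega: "subexp_growth \<omega>"
    and ab: "a < b"
  shows "(\<forall>H::real.
            hausdorff_dim {x \<in> {a<..<b}. weak_scaling_exp (wcoef \<psi> f) x = ereal H}
              \<le> (INF p. ereal (H * p) - scaling_fun \<theta> \<omega> (wcoef \<psi> f) a b p + 1))
       \<and> (\<forall>c::real. (\<forall>p. scaling_fun \<theta> \<omega> (wcoef \<psi> f) a b p = ereal (c * p)) \<longrightarrow>
            (\<forall>H::real. H \<noteq> c \<longrightarrow>
               {x \<in> {a<..<b}. weak_scaling_exp (wcoef \<psi> f) x = ereal H} = {}))"
proof (intro conjI allI impI)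
  fix H :: real
  show "hausdorff_dim {x \<in> {a<..<b}. weak_scaling_exp (wcoef \<psi> f) x = ereal H}
      \<le> (INF p. ereal (H * p) - scaling_fun \<theta> \<omega> (wcoef \<psi> f) a b p + 1)"
    by (intro INF_greatest hausdorff_dim_weak_scaling_level_set_le[OF theta omega])
next
  fix c H :: real
  assume linear: "\<forall>p. scaling_fun \<theta> \<omega> (wcoef \<psi> f) a b p = ereal (c * p)" and "H \<noteq> c"
  define d where "d = H - c"
  define p where "p = - 2 / d"
  have "d \<noteq> 0" using \<open>H \<noteq> c\<close> by (simp add: d_def)
  then have "d * p = - 2" by (simp add: p_def)
  then have "H * p - c * p + 1 = -1" by (simp add: d_def algebra_simps)
  then have "ereal (H * p) - scaling_fun \<theta> \<omega> (wcoef \<psi> f) a b p + 1 < 0"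
    using linear by (simp add: one_ereal_def)
  then show "{x \<in> {a<..<b}. weak_scaling_exp (wcoef \<psi> f) x = ereal H} = {}"
    by (rule weak_scaling_level_set_empty[OF theta omega])
qed

end
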